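(* Let $(R,\mathfrak{m})$ be a Gorenstein local ring, let $q$ be a prime power and $k$ a positive integer. Suppose $\mathfrak{m}^2\neq(0)$, $\mathfrak{m}^3=(0)$, $|R/\mathfrak{m}|=q$, and $\dim_{R/\mathfrak{m}}(\mathfrak{m}/\mathfrak{m}^2)=k>6$. Then $\mathbb{AG}(R)$ contains a subgraph isomorphic to the complete bipartite graph $K_{k-6,3}$.
   Context: All rings are commutative with $1\neq 0$. A Noetherian local ring $(R,\mathfrak{m})$ is called Gorenstein if $\dim_{R/\mathfrak{m}}\operatorname{Ann}(\mathfrak{m})=1$. An ideal $I$ of $R$ is an annihilating-ideal if $IJ=(0)$ for some nonzero ideal $J$ of $R$. The annihilating-ideal graph $\mathbb{AG}(R)$ is the simple graph whose vertices are the nonzero annihilating-ideals of $R$, with distinct vertices $I,J$ adjacent iff $IJ=(0)$. *)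

theory Defs
  imports Main "HOL-Computational_Algebra.Primes"
begin

text \<open>Commutative rings with 1 \<noteq> 0 are modelled by the type class comm_ring_1
  (which includes 0 \<noteq> 1). Ideals are subsets of the carrier type.\<close>

definition is_ideal :: "'a::comm_ring_1 set \<Rightarrow> bool" where
  "is_ideal I \<longleftrightarrow> 0 \<in> I \<and> (\<forall>x\<in>I. \<forall>y\<in>I. x + y \<in> I) \<and> (\<forall>r x. x \<in> I \<longrightarrow> r * x \<in> I)"

definition ideal_gen :: "'a::comm_ring_1 set \<Rightarrow> 'a set" where
  "ideal_gen S = {\<Sum>x\<in>T. r x * x | T r. finite T \<and> T \<subseteq> S}"

definition ideal_prod :: "'a::comm_ring_1 set \<Rightarrow> 'a set \<Rightarrow> 'a set" where
  "ideal_prod I J = ideal_gen {x * y | x y. x \<in> I \<and> y \<in> J}"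

fun ideal_pow :: "'a::comm_ring_1 set \<Rightarrow> nat \<Rightarrow> 'a set" where
  "ideal_pow I 0 = UNIV"
| "ideal_pow I (Suc n) = ideal_prod I (ideal_pow I n)"

definition zero_ideal :: "'a::comm_ring_1 set" where
  "zero_ideal = {0}"

definition maximal_ideal :: "'a::comm_ring_1 set \<Rightarrow> bool" where
  "maximal_ideal M \<longleftrightarrow> is_ideal M \<and> M \<noteq> UNIV \<and>
     (\<forall>J. is_ideal J \<and> M \<subseteq> J \<longrightarrow> J = M \<or> J = UNIV)"

definition noetherian_ring :: "'a::comm_ring_1 itself \<Rightarrow> bool" where
  "noetherian_ring _ \<longleftrightarrow> (\<forall>I::'a set. is_ideal I \<longrightarrow> (\<exists>S. finite S \<and> I = ideal_gen S))"

definition noetherian_local :: "'a::comm_ring_1 set \<Rightarrow> bool" where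
  "noetherian_local M \<longleftrightarrow> noetherian_ring TYPE('a) \<and> maximal_ideal M \<and>
     (\<forall>M'. maximal_ideal M' \<longrightarrow> M' = M)"

definition residue_field :: "'a::comm_ring_1 set \<Rightarrow> 'a set set" where
  "residue_field M = UNIV // {(x, y). x - y \<in> M}"

definition annihilator :: "'a::comm_ring_1 set \<Rightarrow> 'a set" where
  "annihilator I = {x. \<forall>y\<in>I. x * y = 0}"

text \<open>Dimension over R/M of N/L, where L \<subseteq> N are R-submodules (ideals) with M N \<subseteq> L,
  so that N/L is an R/M-vector space: the least number of elements of N whose images
  span N/L (R-linear spans and R/M-linear spans of N/L coincide).\<close>
definition res_dim :: "'a::comm_ring_1 set \<Rightarrow> 'a set \<Rightarrow> nat" where
  "res_dim N L = (LEAST n. \<exists>S. finite S \<and> card S = n \<and> S \<subseteq> N \<and> ideal_gen (S \<union> L) = N)"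

definition gorenstein_local :: "'a::comm_ring_1 set \<Rightarrow> bool" where
  "gorenstein_local M \<longleftrightarrow> noetherian_local M \<and> res_dim (annihilator M) {0} = 1"

definition annihilating_ideal :: "'a::comm_ring_1 set \<Rightarrow> bool" where
  "annihilating_ideal I \<longleftrightarrow> is_ideal I \<and>
     (\<exists>J. is_ideal J \<and> J \<noteq> {0} \<and> ideal_prod I J = {0})"

definition AG_vertex :: "'a::comm_ring_1 set \<Rightarrow> bool" where
  "AG_vertex I \<longleftrightarrow> annihilating_ideal I \<and> I \<noteq> {0}"

definition AG_adj :: "'a::comm_ring_1 set \<Rightarrow> 'a set \<Rightarrow> bool" where
  "AG_adj I J \<longleftrightarrow> AG_vertex I \<and> AG_vertex J \<and> I \<noteq> J \<and> ideal_prod I J = {0}"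

definition AG_contains_Kab :: "'a::comm_ring_1 itself \<Rightarrow> nat \<Rightarrow> nat \<Rightarrow> bool" where
  "AG_contains_Kab _ a b \<longleftrightarrow> (\<exists>X Y :: 'a set set. finite X \<and> finite Y \<and> card X = a \<and> card Y = b \<and>
      X \<inter> Y = {} \<and> (\<forall>I\<in>X \<union> Y. AG_vertex I) \<and> (\<forall>I\<in>X. \<forall>J\<in>Y. AG_adj I J))"

end

theory Submission
  imports Defs
begin

text \<open>
  Since \<open>\<mm>\<^sup>2 \<subseteq> Ann(\<mm>) = (z)\<close>, multiplication by any \<open>y \<in> \<mm>\<close> maps an ideal \<open>N \<subseteq> \<mm>\<close> into the
  one-dimensional socle, so the annihilator of \<open>y\<close> in \<open>N\<close> has codimension at most one.
  Choose \<open>y\<^sub>2, y\<^sub>3 \<in> \<mm>\<close> independent modulo \<open>\<mm>\<^sup>2\<close>; then \<open>K = \<mm> \<inter> (0 : y\<^sub>2) \<inter> (0 : y\<^sub>3)\<close> has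
  codimension at most two in \<open>\<mm>\<close> and therefore contains \<open>k - 5\<close> elements \<open>x\<^sub>0, x\<^sub>1, \<dots>\<close> independent
  modulo \<open>\<mm>\<^sup>2\<close>. The ideals \<open>C\<^sub>j = (x\<^sub>0, \<dots>, x\<^sub>j\<^sub>-\<^sub>1) + \<mm>\<^sup>2\<close> for \<open>2 \<le> j \<le> k - 5\<close> are \<open>k - 6\<close> distinct
  ideals inside \<open>K\<close>, hence they annihilate \<open>\<mm>\<^sup>2, (y\<^sub>2), (y\<^sub>3)\<close>; having dimension at least two
  modulo \<open>\<mm>\<^sup>2\<close>, none of them equals one of these three ideals. This is a \<open>K\<^sub>k\<^sub>-\<^sub>6\<^sub>,\<^sub>3\<close>.
\<close>

section \<open>Ideals and the ideals they generate\<close>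

lemma ideal_zero: "is_ideal I \<Longrightarrow> 0 \<in> I"
  and ideal_add: "is_ideal I \<Longrightarrow> x \<in> I \<Longrightarrow> y \<in> I \<Longrightarrow> x + y \<in> I"
  and ideal_mult: "is_ideal I \<Longrightarrow> x \<in> I \<Longrightarrow> r * x \<in> I"
  unfolding is_ideal_def by blast+

lemma ideal_mult_right: "is_ideal I \<Longrightarrow> x \<in> I \<Longrightarrow> x * r \<in> I"
  using ideal_mult[of I x r] by (simp add: mult.commute)

lemma ideal_diff: "is_ideal I \<Longrightarrow> x \<in> I \<Longrightarrow> y \<in> I \<Longrightarrow> x - y \<in> I"
  using ideal_add[of I x "(-1) * y"] ideal_mult[of I y "-1"] by simp

lemma ideal_sum:
  assumes "is_ideal I" "finite T" "\<And>x. x \<in> T \<Longrightarrow> f x \<in> I"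
  shows "sum f T \<in> I"
  using assms(2,3) by (induction T rule: finite_induct) (auto intro: assms(1) ideal_zero ideal_add)

lemma ideal_gen_subset: "S \<subseteq> ideal_gen S"
proof
  fix x assume "x \<in> S"
  then show "x \<in> ideal_gen S" unfolding ideal_gen_def
    by (intro CollectI exI[of _ "{x}"] exI[of _ "\<lambda>_. 1"]) auto
qed

lemma ideal_gen_least: "is_ideal I \<Longrightarrow> S \<subseteq> I \<Longrightarrow> ideal_gen S \<subseteq> I"
  unfolding ideal_gen_def by (auto intro!: ideal_sum ideal_mult)

lemma is_ideal_ideal_gen: "is_ideal (ideal_gen S)"
  unfolding is_ideal_def
proof (intro conjI ballI allI impI)
  show "0 \<in> ideal_gen S" unfolding ideal_gen_def
    by (intro CollectI exI[of _ "{}"]) auto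
next
  fix x y assume "x \<in> ideal_gen S" "y \<in> ideal_gen S"
  then obtain T1 r1 T2 r2 where t: "finite T1" "T1 \<subseteq> S" "x = (\<Sum>v\<in>T1. r1 v * v)"
     "finite T2" "T2 \<subseteq> S" "y = (\<Sum>v\<in>T2. r2 v * v)"
    unfolding ideal_gen_def by blast
  \<comment> \<open>extend both coefficient families by zero to the common support \<open>T1 \<union> T2\<close>\<close>
  define r where "r v = (if v \<in> T1 then r1 v else 0) + (if v \<in> T2 then r2 v else 0)" for v
  have "(\<Sum>v\<in>T1 \<union> T2. r v * v) = (\<Sum>v\<in>T1 \<union> T2. if v \<in> T1 then r1 v * v else 0)
     + (\<Sum>v\<in>T1 \<union> T2. if v \<in> T2 then r2 v * v else 0)"
    unfolding r_def sum.distrib[symmetric] by (rule sum.cong) (auto simp: distrib_right)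
  also have "\<dots> = x + y"
  proof -
    have "(\<Sum>v\<in>T1 \<union> T2. if v \<in> T1 then r1 v * v else 0) = (\<Sum>v\<in>T1. r1 v * v)"
      using t by (intro sum.mono_neutral_cong_right) auto
    moreover have "(\<Sum>v\<in>T1 \<union> T2. if v \<in> T2 then r2 v * v else 0) = (\<Sum>v\<in>T2. r2 v * v)"
      using t by (intro sum.mono_neutral_cong_right) auto
    ultimately show ?thesis using t by simp
  qed
  finally show "x + y \<in> ideal_gen S" unfolding ideal_gen_def using t
    by (intro CollectI exI[of _ "T1 \<union> T2"] exI[of _ r]) auto
next
  fix c x assume "x \<in> ideal_gen S"
  then obtain T r where t: "finite T" "T \<subseteq> S" "x = (\<Sum>v\<in>T. r v * v)"
    unfolding ideal_gen_def by blast
  then have "c * x = (\<Sum>v\<in>T. (c * r v) * v)" by (simp add: sum_distrib_left mult.assoc)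
  then show "c * x \<in> ideal_gen S" unfolding ideal_gen_def using t
    by (intro CollectI exI[of _ T] exI[of _ "\<lambda>v. c * r v"]) auto
qed

lemma ideal_gen_mono: "S \<subseteq> T \<Longrightarrow> ideal_gen S \<subseteq> ideal_gen T"
  by (meson ideal_gen_least ideal_gen_subset is_ideal_ideal_gen order_trans)

lemma ideal_gen_of_ideal: "is_ideal I \<Longrightarrow> ideal_gen I = I"
  by (simp add: ideal_gen_least ideal_gen_subset subset_antisym)

definition principal_ideal :: "'a::comm_ring_1 \<Rightarrow> 'a set" where
  "principal_ideal y = {c * y | c. True}"

lemma is_ideal_principal: "is_ideal (principal_ideal y)"
  unfolding is_ideal_def principal_ideal_def
proof (intro conjI ballI allI impI)
  show "0 \<in> {c * y | c. True}" by (intro CollectI exI[of _ 0]) simp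
next
  fix a b assume "a \<in> {c * y | c. True}" "b \<in> {c * y | c. True}"
  then obtain c d where "a = c * y" "b = d * y" by blast
  then show "a + b \<in> {c * y | c. True}" by (intro CollectI exI[of _ "c + d"]) (simp add: distrib_right)
next
  fix r a assume "a \<in> {c * y | c. True}"
  then obtain c where "a = c * y" by blast
  then show "r * a \<in> {c * y | c. True}" by (intro CollectI exI[of _ "r * c"]) (simp add: mult.assoc)
qed

lemma self_in_principal: "y \<in> principal_ideal y"
  unfolding principal_ideal_def by (auto intro: exI[of _ 1])

lemma principal_subset: "is_ideal I \<Longrightarrow> y \<in> I \<Longrightarrow> principal_ideal y \<subseteq> I"
  unfolding principal_ideal_def by (auto intro: ideal_mult)

lemma ideal_gen_principal: "ideal_gen {z, 0} = principal_ideal z"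
proof
  show "ideal_gen {z, 0} \<subseteq> principal_ideal z"
    using self_in_principal ideal_zero[OF is_ideal_principal]
    by (intro ideal_gen_least[OF is_ideal_principal]) auto
  show "principal_ideal z \<subseteq> ideal_gen {z, 0}"
    using ideal_gen_subset[of "{z, 0}"] by (intro principal_subset[OF is_ideal_ideal_gen]) auto
qed

lemma ideal_prod_eq_zero: "(\<And>x y. x \<in> I \<Longrightarrow> y \<in> J \<Longrightarrow> x * y = 0) \<Longrightarrow> ideal_prod I J = {0}"
proof -
  assume "\<And>x y. x \<in> I \<Longrightarrow> y \<in> J \<Longrightarrow> x * y = 0"
  then have "ideal_prod I J \<subseteq> {0}"
    unfolding ideal_prod_def by (intro ideal_gen_least) (auto simp: is_ideal_def)
  then show ?thesis using ideal_zero[OF is_ideal_ideal_gen] unfolding ideal_prod_def by blast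
qed

lemma mult_in_ideal_prod: "x \<in> I \<Longrightarrow> y \<in> J \<Longrightarrow> x * y \<in> ideal_prod I J"
  unfolding ideal_prod_def by (rule ideal_gen_subset[THEN subsetD]) blast

lemma ideal_prod_subset_left: "is_ideal I \<Longrightarrow> ideal_prod I J \<subseteq> I"
  unfolding ideal_prod_def by (intro ideal_gen_least) (auto intro: ideal_mult_right)

definition ann_in :: "'a::comm_ring_1 set \<Rightarrow> 'a \<Rightarrow> 'a set" where
  "ann_in N y = {x \<in> N. x * y = 0}"

lemma ideal_ann_in: "is_ideal N \<Longrightarrow> is_ideal (ann_in N y)"
  unfolding is_ideal_def ann_in_def by (simp add: distrib_right mult.assoc)

section \<open>Residue dimension\<close>

lemma res_dim_le:
  "finite S \<Longrightarrow> S \<subseteq> N \<Longrightarrow> ideal_gen (S \<union> L) = N \<Longrightarrow> res_dim N L \<le> card S"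
  unfolding res_dim_def by (rule Least_le) blast

lemma res_dim_attained:
  assumes "finite S" "S \<subseteq> N" "ideal_gen (S \<union> L) = N"
  obtains S' where "finite S'" "card S' = res_dim N L" "S' \<subseteq> N" "ideal_gen (S' \<union> L) = N"
  using LeastI[of "\<lambda>n. \<exists>S. finite S \<and> card S = n \<and> S \<subseteq> N \<and> ideal_gen (S \<union> L) = N" "card S"]
    assms unfolding res_dim_def by blast

lemma annihilator_ideal: "is_ideal (annihilator I)"
  unfolding is_ideal_def annihilator_def by (simp add: distrib_right mult.assoc)

lemma one_dim_annihilator_principal:
  fixes M :: "'a::comm_ring_1 set"
  assumes "noetherian_ring TYPE('a)" "res_dim (annihilator M) {0} = 1"
  obtains z where "annihilator M = principal_ideal z"
proof -
  obtain S0 where S0: "finite S0" "annihilator M = ideal_gen S0"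
    using assms(1) annihilator_ideal unfolding noetherian_ring_def by blast
  have "ideal_gen (S0 \<union> {0}) = annihilator M"
  proof
    show "ideal_gen (S0 \<union> {0}) \<subseteq> annihilator M"
      using S0(2) ideal_gen_subset ideal_zero[OF annihilator_ideal]
      by (intro ideal_gen_least[OF annihilator_ideal]) auto
    show "annihilator M \<subseteq> ideal_gen (S0 \<union> {0})"
      using S0(2) ideal_gen_mono by blast
  qed
  then obtain S where "card S = 1" "ideal_gen (S \<union> {0}) = annihilator M"
    using res_dim_attained[OF S0(1)] S0(2) ideal_gen_subset assms(2) by metis
  then obtain z where "annihilator M = ideal_gen {z, 0}"
    by (metis card_1_singletonE insert_is_Un)
  then show ?thesis using that ideal_gen_principal by metis
qed

lemma maximal_ideal_ideal: "maximal_ideal M \<Longrightarrow> is_ideal M"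
  unfolding maximal_ideal_def by blast

lemma unit_mod_maximal:
  assumes max: "maximal_ideal M" and c: "c \<notin> M"
  obtains s m where "m \<in> M" "s * c + m = 1"
proof -
  have M: "is_ideal M" using max by (rule maximal_ideal_ideal)
  define J where "J = {m + s * c | m s. m \<in> M}"
  have "is_ideal J" unfolding is_ideal_def J_def
  proof (intro conjI ballI allI impI)
    show "0 \<in> {m + s * c |m s. m \<in> M}"
      using ideal_zero[OF M] by (intro CollectI exI[of _ 0]) auto
  next
    fix x y assume "x \<in> {m + s * c |m s. m \<in> M}" "y \<in> {m + s * c |m s. m \<in> M}"
    then obtain m1 s1 m2 s2 where "x = m1 + s1 * c" "y = m2 + s2 * c" "m1 \<in> M" "m2 \<in> M"
      by blast
    then show "x + y \<in> {m + s * c |m s. m \<in> M}" using ideal_add[OF M]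
      by (intro CollectI exI[of _ "m1 + m2"] exI[of _ "s1 + s2"]) (auto simp: algebra_simps)
  next
    fix r x assume "x \<in> {m + s * c |m s. m \<in> M}"
    then obtain m1 s1 where "x = m1 + s1 * c" "m1 \<in> M" by blast
    then show "r * x \<in> {m + s * c |m s. m \<in> M}" using ideal_mult[OF M]
      by (intro CollectI exI[of _ "r * m1"] exI[of _ "r * s1"]) (auto simp: algebra_simps)
  qed
  moreover have "M \<subseteq> J"
  proof
    fix x assume "x \<in> M"
    then show "x \<in> J" unfolding J_def by (intro CollectI exI[of _ x] exI[of _ 0]) simp
  qed
  moreover have "c \<in> J"
    unfolding J_def using ideal_zero[OF M] by (intro CollectI exI[of _ 0] exI[of _ 1]) simp
  ultimately have "J = UNIV" using max c unfolding maximal_ideal_def by blast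
  then obtain m s where "1 = m + s * c" "m \<in> M" unfolding J_def by blast
  then show ?thesis using that by (metis add.commute)
qed

section \<open>Chains built from independent sequences\<close>

lemma independent_list_exists:
  assumes "\<And>S. finite S \<Longrightarrow> S \<subseteq> K \<Longrightarrow> card S < n \<Longrightarrow> \<exists>x\<in>K. x \<notin> cl S"
  obtains xs where "length xs = n" "set xs \<subseteq> K"
    "\<forall>i<length xs. xs ! i \<notin> cl (set (take i xs))"
proof -
  have "\<exists>xs. length xs = m \<and> set xs \<subseteq> K \<and> (\<forall>i<length xs. xs ! i \<notin> cl (set (take i xs)))"
    if "m \<le> n" for m
    using that
  proof (induction m)
    case 0
    then show ?case by simp
  next
    case (Suc m)
    then obtain xs where xs: "length xs = m" "set xs \<subseteq> K"
      "\<forall>i<length xs. xs ! i \<notin> cl (set (take i xs))"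
      by auto
    obtain x where x: "x \<in> K" "x \<notin> cl (set xs)"
      using assms[of "set xs"] xs card_length[of xs] Suc.prems by fastforce
    have "\<forall>i<Suc m. (xs @ [x]) ! i \<notin> cl (set (take i (xs @ [x])))"
      using xs x by (auto simp: nth_append less_Suc_eq)
    then show ?case using xs x by (intro exI[of _ "xs @ [x]"]) auto
  qed
  then show ?thesis using that by blast
qed

lemma nth_in_closure_take:
  assumes "\<And>S. S \<subseteq> cl S" "i < j" "j \<le> length xs"
  shows "xs ! i \<in> cl (set (take j xs))"
  using assms by (metis in_set_conv_nth length_take min.absorb2 nth_take order.strict_trans2 subsetD)

lemma independent_list_chain_inj:
  assumes ext: "\<And>S. S \<subseteq> cl S" and ind: "\<forall>i<length xs. xs ! i \<notin> cl (set (take i xs))"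
  shows "inj_on (\<lambda>j. cl (set (take j xs))) {..length xs}"
proof -
  have "cl (set (take i xs)) \<noteq> cl (set (take j xs))" if "i < j" "j \<le> length xs" for i j
    using nth_in_closure_take[OF ext that] ind[rule_format, of i] that by auto
  then show ?thesis unfolding inj_on_def by (metis atMost_iff linorder_neqE_nat)
qed

lemma AG_contains_KabI:
  fixes X Y :: "'a::comm_ring_1 set set"
  assumes fin: "finite X" "finite Y" and card: "card X = a" "card Y = b"
    and disj: "X \<inter> Y = {}" and ne: "X \<noteq> {}" "Y \<noteq> {}"
    and ideals: "\<And>I. I \<in> X \<union> Y \<Longrightarrow> is_ideal I \<and> I \<noteq> {0}"
    and zero: "\<And>I J x y. I \<in> X \<Longrightarrow> J \<in> Y \<Longrightarrow> x \<in> I \<Longrightarrow> y \<in> J \<Longrightarrow> x * y = 0"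
  shows "AG_contains_Kab TYPE('a) a b"
proof -
  have prod_XY: "ideal_prod I J = {0}" if "I \<in> X" "J \<in> Y" for I J
    using zero[OF that] by (intro ideal_prod_eq_zero)
  have prod_YX: "ideal_prod J I = {0}" if "I \<in> X" "J \<in> Y" for I J
    using zero[OF that] by (intro ideal_prod_eq_zero) (metis mult.commute)
  have vertex: "AG_vertex I" if "I \<in> X \<union> Y" for I
  proof -
    have "\<exists>J. is_ideal J \<and> J \<noteq> {0} \<and> ideal_prod I J = {0}"
      using that ne ideals prod_XY prod_YX by blast
    then show ?thesis using ideals[OF that] unfolding AG_vertex_def annihilating_ideal_def by blast
  qed
  have "AG_adj I J" if "I \<in> X" "J \<in> Y" for I J
    using vertex prod_XY[OF that] disj that unfolding AG_adj_def by blast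
  then show ?thesis unfolding AG_contains_Kab_def using fin card disj vertex by blast
qed

section \<open>Local rings whose maximal ideal has vanishing cube\<close>

locale cube_zero_local =
  fixes M :: "'a::comm_ring_1 set"
  assumes maximal: "maximal_ideal M"
    and cube_zero: "ideal_pow M 3 = {0}"
begin

abbreviation M2 :: "'a set" where "M2 \<equiv> ideal_pow M 2"

lemma ideal_M: "is_ideal M"
  using maximal by (rule maximal_ideal_ideal)

lemma M2_eq: "M2 = ideal_prod M (ideal_prod M UNIV)"
  by (simp add: numeral_2_eq_2)

lemma ideal_M2: "is_ideal M2"
  unfolding M2_eq ideal_prod_def by (rule is_ideal_ideal_gen)

lemma M2_subset_M: "M2 \<subseteq> M"
  unfolding M2_eq by (rule ideal_prod_subset_left[OF ideal_M])

lemma mult_in_M2: "x \<in> M \<Longrightarrow> y \<in> M \<Longrightarrow> x * y \<in> M2"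
  unfolding M2_eq using mult_in_ideal_prod[of y M 1 UNIV] by (auto intro: mult_in_ideal_prod)

lemma M_kills_M2: "m \<in> M \<Longrightarrow> w \<in> M2 \<Longrightarrow> m * w = 0"
  using mult_in_ideal_prod[of m M w M2] cube_zero by (simp add: numeral_3_eq_3 numeral_2_eq_2)

lemma M2_subset_annihilator: "M2 \<subseteq> annihilator M"
proof
  fix w assume "w \<in> M2"
  then have "\<forall>m\<in>M. w * m = 0" using M_kills_M2 by (simp add: mult.commute)
  then show "w \<in> annihilator M" unfolding annihilator_def by blast
qed

text \<open>The ideal generated by \<open>S\<close> together with \<open>\<mm>\<^sup>2\<close>; its image in \<open>\<mm>/\<mm>\<^sup>2\<close> is the
  residue-field span of the image of \<open>S\<close>.\<close>

definition mspan :: "'a set \<Rightarrow> 'a set" where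
  "mspan S = ideal_gen (S \<union> M2)"

lemma ideal_mspan: "is_ideal (mspan S)"
  unfolding mspan_def by (rule is_ideal_ideal_gen)

lemma subset_mspan: "S \<subseteq> mspan S" and M2_subset_mspan: "M2 \<subseteq> mspan S"
  unfolding mspan_def using ideal_gen_subset by blast+

lemma mspan_mono: "S \<subseteq> T \<Longrightarrow> mspan S \<subseteq> mspan T"
  unfolding mspan_def by (intro ideal_gen_mono) auto

lemma mspan_subset_M: "S \<subseteq> M \<Longrightarrow> mspan S \<subseteq> M"
  unfolding mspan_def using M2_subset_M by (intro ideal_gen_least[OF ideal_M]) auto

lemma mspan_empty: "mspan {} = M2"
  unfolding mspan_def by (simp add: ideal_gen_of_ideal[OF ideal_M2])

lemma exists_outside_mspan:
  assumes "finite S" "S \<subseteq> M" "card S < res_dim M M2"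
  obtains x where "x \<in> M" "x \<notin> mspan S"
proof -
  have "mspan S \<noteq> M"
    using res_dim_le[OF assms(1,2)] assms(3) unfolding mspan_def by fastforce
  then show ?thesis using that mspan_subset_M[OF assms(2)] by blast
qed

lemma principal_in_mspan:
  assumes y: "y \<in> M" and a: "a \<in> principal_ideal y" "a \<notin> M2" and b: "b \<in> principal_ideal y"
  shows "b \<in> mspan {a}"
proof -
  obtain r0 r1 where r: "a = r0 * y" "b = r1 * y"
    using a(1) b unfolding principal_ideal_def by blast
  have "r0 \<notin> M" using r(1) a(2) mult_in_M2 y by blast
  then obtain s m where sm: "m \<in> M" "s * r0 + m = 1"
    using unit_mod_maximal[OF maximal] by blast
  have "b = (r1 * s) * a + r1 * (m * y)"
  proof -
    have "(r1 * s) * a + r1 * (m * y) = r1 * ((s * r0 + m) * y)"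
      using r(1) by (simp add: algebra_simps)
    then show ?thesis using sm(2) r(2) by simp
  qed
  moreover have "a \<in> mspan {a}" "m * y \<in> mspan {a}"
    using subset_mspan M2_subset_mspan mult_in_M2[OF sm(1) y] by blast+
  ultimately show ?thesis using ideal_add ideal_mult ideal_mspan by metis
qed

lemma M2_subset_ann_in:
  assumes "M2 \<subseteq> N" "y \<in> M" shows "M2 \<subseteq> ann_in N y"
proof
  fix w assume "w \<in> M2"
  then have "w * y = 0" using M_kills_M2[OF assms(2)] by (metis mult.commute)
  then show "w \<in> ann_in N y" using \<open>w \<in> M2\<close> assms(1) unfolding ann_in_def by blast
qed

text \<open>Each has dimension at least two modulo \<open>\<mm>\<^sup>2\<close>,
  so it is neither \<open>\<mm>\<^sup>2\<close> nor a principal ideal \<open>(y)\<close> with \<open>y \<in> \<mm>\<close>.\<close>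

lemma independent_chain_ideals:
  assumes xs: "2 \<le> length xs" "set xs \<subseteq> K" "\<forall>i<length xs. xs ! i \<notin> mspan (set (take i xs))"
    and K: "is_ideal K" "M2 \<subseteq> K"
  obtains X where "finite X" "card X = length xs - 1"
    "\<And>I. I \<in> X \<Longrightarrow> is_ideal I \<and> I \<noteq> {0} \<and> I \<subseteq> K \<and> I \<noteq> M2 \<and> (\<forall>y\<in>M. I \<noteq> principal_ideal y)"
proof -
  define C where "C j = mspan (set (take j xs))" for j
  have take_1: "take 1 xs = [xs ! 0]" using xs(1) by (cases xs) auto
  have x0: "xs ! 0 \<notin> M2" using xs(3)[rule_format, of 0] xs(1) mspan_empty by (cases xs) auto
  have x1: "xs ! 1 \<notin> mspan {xs ! 0}" using xs(3)[rule_format, of 1] xs(1) take_1 by simp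
  have "inj_on C {2..length xs}"
    using independent_list_chain_inj[OF subset_mspan xs(3)] unfolding C_def
    by (rule inj_on_subset) auto
  then have card: "card (C ` {2..length xs}) = length xs - 1" by (simp add: card_image)
  have "is_ideal (C j) \<and> C j \<noteq> {0} \<and> C j \<subseteq> K \<and> C j \<noteq> M2 \<and> (\<forall>y\<in>M. C j \<noteq> principal_ideal y)"
    if j: "j \<in> {2..length xs}" for j
  proof -
    have x01: "xs ! 0 \<in> C j" "xs ! 1 \<in> C j"
      using nth_in_closure_take[of mspan] subset_mspan j unfolding C_def by auto
    have "C j \<subseteq> K"
      using xs(2) set_take_subset[of j xs] K unfolding C_def mspan_def by (intro ideal_gen_least) auto
    moreover have "C j \<noteq> principal_ideal y" if "y \<in> M" for y
      using principal_in_mspan[OF that] x01 x0 x1 by blast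
    ultimately show ?thesis
      using x01 x0 ideal_zero[OF ideal_M2] unfolding C_def by (auto simp: ideal_mspan)
  qed
  then show ?thesis using that[of "C ` {2..length xs}"] card by blast
qed

lemma three_ideals:
  assumes "M2 \<noteq> {0}" "y2 \<notin> M2" "y3 \<notin> mspan {y2}"
  shows "card {M2, principal_ideal y2, principal_ideal y3} = 3"
    and "\<And>J. J \<in> {M2, principal_ideal y2, principal_ideal y3} \<Longrightarrow> is_ideal J \<and> J \<noteq> {0}"
proof -
  have principal_M2: "M2 \<noteq> principal_ideal y" "principal_ideal y \<noteq> {0}" if "y \<notin> M2" for y
    using self_in_principal[of y] that ideal_zero[OF ideal_M2] by auto
  have y3: "y3 \<notin> M2" using assms(3) M2_subset_mspan by blast
  have "principal_ideal y2 \<noteq> principal_ideal y3"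
    using assms(3) self_in_principal principal_subset[OF ideal_mspan] subset_mspan by blast
  then show "card {M2, principal_ideal y2, principal_ideal y3} = 3"
    using principal_M2(1)[OF assms(2)] principal_M2(1)[OF y3] by (simp add: card_insert_if)
  show "is_ideal J \<and> J \<noteq> {0}" if "J \<in> {M2, principal_ideal y2, principal_ideal y3}" for J
    using that assms(1,2) y3 principal_M2(2) ideal_M2 is_ideal_principal by blast
qed

end

text \<open>In addition the socle \<open>Ann(\<mm>)\<close> is generated by a single element \<open>z\<close>; this is the
  Gorenstein condition.\<close>

locale gorenstein_cube_zero = cube_zero_local +
  fixes z :: 'a
  assumes socle: "annihilator M = principal_ideal z"
begin

lemma socle_kills_M:
  assumes "m \<in> M" shows "m * z = 0"
proof -
  have "z \<in> annihilator M" using socle self_in_principal by simp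
  then show ?thesis using assms unfolding annihilator_def by (simp add: mult.commute)
qed

text \<open>Multiplication by \<open>y \<in> \<mm>\<close> maps an ideal \<open>N \<subseteq> \<mm>\<close> into the one-dimensional socle, so
  its kernel \<open>ann_in N y\<close> has codimension at most one in \<open>N\<close>: a single \<open>u \<in> N\<close> accounts
  for the rest.\<close>

lemma ann_in_codim_one:
  assumes N: "is_ideal N" "N \<subseteq> M" and y: "y \<in> M"
  obtains u where "u \<in> N" "\<forall>x\<in>N. \<exists>t. x - t * u \<in> ann_in N y"
proof (cases "\<forall>x\<in>N. x * y = 0")
  case True
  then have "\<forall>x\<in>N. x - 0 * 0 \<in> ann_in N y" unfolding ann_in_def by simp
  then show ?thesis using that ideal_zero[OF N(1)] by blast
next
  case False
  then obtain u where u: "u \<in> N" "u * y \<noteq> 0" by blast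
  have into_socle: "\<exists>a. x * y = a * z" if "x \<in> N" for x
    using mult_in_M2[of x y] that N(2) y M2_subset_annihilator
    unfolding socle principal_ideal_def by blast
  obtain c where c: "u * y = c * z" using into_socle[OF u(1)] by blast
  have "c \<notin> M" using socle_kills_M c u(2) by metis
  then obtain s m where sm: "m \<in> M" "s * c + m = 1"
    using unit_mod_maximal[OF maximal] by blast
  have "\<exists>t. x - t * u \<in> ann_in N y" if x: "x \<in> N" for x
  proof -
    obtain a where a: "x * y = a * z" using into_socle[OF x] by blast
    have "(x - (s * a) * u) * y = a * ((1 - s * c) * z)"
      using a c by (simp add: algebra_simps)
    also have "\<dots> = 0"
      using sm socle_kills_M[OF sm(1)] by (simp add: eq_diff_eq[symmetric])
    finally have "(x - (s * a) * u) * y = 0" .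
    moreover have "x - (s * a) * u \<in> N"
      using x u(1) ideal_diff ideal_mult N(1) by blast
    ultimately show ?thesis unfolding ann_in_def by blast
  qed
  then show ?thesis using that u(1) by blast
qed

lemma ann_in_codim_two:
  assumes "y2 \<in> M" "y3 \<in> M"
  obtains u2 u3 where "u2 \<in> M" "u3 \<in> M"
    "\<forall>x\<in>M. \<exists>t2 t3. x - t2 * u2 - t3 * u3 \<in> ann_in (ann_in M y2) y3"
proof -
  have N1: "is_ideal (ann_in M y2)" "ann_in M y2 \<subseteq> M"
    using ideal_ann_in[OF ideal_M] unfolding ann_in_def by auto
  obtain u2 where u2: "u2 \<in> M" "\<forall>x\<in>M. \<exists>t. x - t * u2 \<in> ann_in M y2"
    using ann_in_codim_one[OF ideal_M subset_refl assms(1)] by blast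
  obtain u3 where u3: "u3 \<in> ann_in M y2" "\<forall>x\<in>ann_in M y2. \<exists>t. x - t * u3 \<in> ann_in (ann_in M y2) y3"
    using ann_in_codim_one[OF N1 assms(2)] by blast
  have "\<exists>t2 t3. x - t2 * u2 - t3 * u3 \<in> ann_in (ann_in M y2) y3" if "x \<in> M" for x
    using u2(2) u3(2) that by blast
  then show ?thesis using that u2(1) u3(1) N1(2) by blast
qed

lemma exists_annihilator_outside_mspan:
  assumes S: "finite S" "S \<subseteq> M" "card S + 2 < res_dim M M2" and y: "y2 \<in> M" "y3 \<in> M"
  obtains x where "x \<in> ann_in (ann_in M y2) y3" "x \<notin> mspan S"
proof -
  have "\<not> ann_in (ann_in M y2) y3 \<subseteq> mspan S"
  proof
    assume K: "ann_in (ann_in M y2) y3 \<subseteq> mspan S"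
    obtain u2 u3 where u: "u2 \<in> M" "u3 \<in> M"
      and dec: "\<forall>x\<in>M. \<exists>t2 t3. x - t2 * u2 - t3 * u3 \<in> ann_in (ann_in M y2) y3"
      using ann_in_codim_two[OF y] by blast
    \<comment> \<open>then \<open>S\<close> together with \<open>u\<^sub>2, u\<^sub>3\<close> would span \<open>\<mm>\<close> modulo \<open>\<mm>\<^sup>2\<close>\<close>
    define S' where "S' = insert u2 (insert u3 S)"
    have S': "finite S'" "S' \<subseteq> M" "card S' < res_dim M M2"
      using S u unfolding S'_def by (auto simp: card_insert_if)
    have "x \<in> mspan S'" if x: "x \<in> M" for x
    proof -
      obtain t2 t3 where "x - t2 * u2 - t3 * u3 \<in> mspan S'"
        using dec x K mspan_mono[of S S'] unfolding S'_def by blast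
      moreover have "u2 \<in> mspan S'" "u3 \<in> mspan S'"
        using subset_mspan[of S'] unfolding S'_def by blast+
      ultimately have "(x - t2 * u2 - t3 * u3) + t3 * u3 + t2 * u2 \<in> mspan S'"
        using ideal_add ideal_mult ideal_mspan by metis
      then show ?thesis by simp
    qed
    then show False using exists_outside_mspan[OF S'] by blast
  qed
  then show ?thesis using that by blast
qed

lemma annihilator_sequence:
  assumes "5 < res_dim M M2"
  obtains y2 y3 xs where "y2 \<in> M" "y2 \<notin> M2" "y3 \<in> M" "y3 \<notin> mspan {y2}"
    "length xs = res_dim M M2 - 5" "set xs \<subseteq> ann_in (ann_in M y2) y3"
    "\<forall>i<length xs. xs ! i \<notin> mspan (set (take i xs))"
proof -
  obtain y2 where y2: "y2 \<in> M" "y2 \<notin> M2"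
    using exists_outside_mspan[of "{}"] assms mspan_empty by auto
  obtain y3 where y3: "y3 \<in> M" "y3 \<notin> mspan {y2}"
    using exists_outside_mspan[of "{y2}"] assms y2(1) by auto
  have outside: "\<exists>x\<in>ann_in (ann_in M y2) y3. x \<notin> mspan S"
    if S: "finite S" "S \<subseteq> ann_in (ann_in M y2) y3" "card S < res_dim M M2 - 5" for S
  proof -
    have "S \<subseteq> M" using S(2) unfolding ann_in_def by blast
    moreover have "card S + 2 < res_dim M M2" using S(3) by linarith
    ultimately show ?thesis
      using exists_annihilator_outside_mspan[OF S(1) _ _ y2(1) y3(1)] by blast
  qed
  obtain xs where "length xs = res_dim M M2 - 5" "set xs \<subseteq> ann_in (ann_in M y2) y3"
    "\<forall>i<length xs. xs ! i \<notin> mspan (set (take i xs))"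
    by (rule independent_list_exists[OF outside])
  then show ?thesis using that y2 y3 by blast
qed

theorem AG_contains_K3:
  assumes M2_nonzero: "M2 \<noteq> {0}" and dim: "6 < res_dim M M2"
  shows "AG_contains_Kab TYPE('a) (res_dim M M2 - 6) 3"
proof -
  have "5 < res_dim M M2" using dim by simp
  then obtain y2 y3 xs where y2: "y2 \<in> M" "y2 \<notin> M2" and y3: "y3 \<in> M" "y3 \<notin> mspan {y2}"
    and xs: "length xs = res_dim M M2 - 5" "set xs \<subseteq> ann_in (ann_in M y2) y3"
      "\<forall>i<length xs. xs ! i \<notin> mspan (set (take i xs))"
    by (rule annihilator_sequence)
  define K where "K = ann_in (ann_in M y2) y3"
  define Y where "Y = {M2, principal_ideal y2, principal_ideal y3}"
  have K: "is_ideal K" "M2 \<subseteq> K"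
    unfolding K_def using M2_subset_ann_in[OF M2_subset_ann_in[OF M2_subset_M y2(1)] y3(1)]
    by (auto intro: ideal_ann_in ideal_M)
  have len: "2 \<le> length xs" "length xs - 1 = res_dim M M2 - 6" using xs(1) dim by auto
  obtain X where X: "finite X" "card X = length xs - 1"
    and X_ideals: "\<And>I. I \<in> X \<Longrightarrow>
      is_ideal I \<and> I \<noteq> {0} \<and> I \<subseteq> K \<and> I \<noteq> M2 \<and> (\<forall>y\<in>M. I \<noteq> principal_ideal y)"
    by (rule independent_chain_ideals[OF len(1) xs(2,3)[folded K_def] K]) blast
  have products: "x * y = 0" if xy: "I \<in> X" "J \<in> Y" "x \<in> I" "y \<in> J" for I J x y
  proof -
    have x: "x \<in> K" using xy(1,3) X_ideals by blast
    consider "J = M2" | c where "y = c * y2" | c where "y = c * y3"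
      using xy(2,4) unfolding Y_def principal_ideal_def by blast
    then show ?thesis
      using x M_kills_M2 xy(4) unfolding K_def ann_in_def by cases (auto simp: mult.left_commute)
  qed
  show ?thesis
  proof (rule AG_contains_KabI[OF X(1) _ _ three_ideals(1)[OF M2_nonzero y2(2) y3(2), folded Y_def]])
    show "finite Y" "Y \<noteq> {}" unfolding Y_def by auto
    show "card X = res_dim M M2 - 6" using X(2) len(2) by simp
    show "X \<noteq> {}" using X(2) len by auto
    show "X \<inter> Y = {}" unfolding Y_def using X_ideals y2(1) y3(1) by blast
    show "is_ideal I \<and> I \<noteq> {0}" if "I \<in> X \<union> Y" for I
      using that X_ideals three_ideals(2)[OF M2_nonzero y2(2) y3(2), folded Y_def] by blast
  qed (fact products)
qed

end

theorem lemma2p8: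
  fixes M :: "'a::comm_ring_1 set" and q k :: nat
  assumes "gorenstein_local M"
    and "\<exists>(p::nat) n. prime p \<and> n \<ge> 1 \<and> q = p ^ n"
    and "k > 0"
    and "ideal_pow M 2 \<noteq> {0}"
    and "ideal_pow M 3 = {0}"
    and "card (residue_field M) = q"
    and "res_dim M (ideal_pow M 2) = k"
    and "k > 6"
  shows "AG_contains_Kab TYPE('a) (k - 6) 3"
proof -
  have noeth: "noetherian_ring TYPE('a)" and max: "maximal_ideal M"
    and socle_dim: "res_dim (annihilator M) {0} = 1"
    using assms(1) unfolding gorenstein_local_def noetherian_local_def by blast+
  obtain z where socle: "annihilator M = principal_ideal z"
    using one_dim_annihilator_principal[OF noeth socle_dim] by blast
  interpret gorenstein_cube_zero M z
    by unfold_locales (fact max assms(5) socle)+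
  show ?thesis using AG_contains_K3 assms(4,7,8) by simp
qed

end
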